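(* Let $(G,\Lambda)$ be a pseudo free self-similar action and $x\in\Lambda^\infty$. Then $x$ is $G$-periodic if and only if $\sigma^n(x)$ is $G$-periodic for every $n\in\mathbb{N}^k$.
   Context: Let $k\ge1$. A $k$-graph is a countable small category $\Lambda$ together with a functor $d:\Lambda\to\mathbb{N}^k$ (the degree map) with the unique factorization property: for every $\mu\in\Lambda$ and $m,n\in\mathbb{N}^k$ with $d(\mu)=m+n$ there are unique $\alpha,\beta\in\Lambda$ with $d(\alpha)=m$, $d(\beta)=n$ and $\mu=\alpha\beta$. Write $\Lambda^n=d^{-1}(n)$; $\Lambda^0$ is identified with the set of objects (vertices), and $r,s$ denote range and source. All $k$-graphs are assumed row-finite and source-free. Infinite paths: let $\Omega_k=\{(p,q)\in\mathbb{N}^k\times\mathbb{N}^k:p\le q\}$ with $r(p,q)=(p,p)$, $s(p,q)=(q,q)$, $(p,q)(q,m)=(p,m)$, $d(p,q)=q-p$. An infinite path is a degree-preserving functor $x:\Omega_k\to\Lambda$; $\Lambda^\infty$ is the set of infinite paths, and the shift is $\sigma^n(x)(p,q)=x(p+n,q+n)$. Self-similar actions: $G$ is a countable discrete group. A self-similar action $(G,\Lambda)$ consists of an action of $G$ on $\Lambda$ by automorphisms (bijections preserving $d$, $r$, $s$), written $g\cdot\mu$, and a restriction map $G\times\Lambda\to G$, $(g,\mu)\mapsto g|_\mu$, such that for all $g,h\in G$, $v\in\Lambda^0$ and $\mu,\nu$ with $s(\mu)=r(\nu)$: $g\cdot(\mu\nu)=(g\cdot\mu)(g|_\mu\cdot\nu)$;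 $g|_v=g$; $g|_{\mu\nu}=(g|_\mu)|_\nu$; $1_G|_\mu=1_G$; $(gh)|_\mu=g|_{h\cdot\mu}\,h|_\mu$. For $x\in\Lambda^\infty$, $(g\cdot x)(p,q)=g|_{x(0,p)}\cdot x(p,q)$. The action is pseudo free if $g\cdot\mu=\mu$ and $g|_\mu=1_G$ for some $\mu\in\Lambda$ imply $g=1_G$. $G$-aperiodicity: an infinite path $x$ is $G$-aperiodic if for all $g\in G$ and $p,q\in\mathbb{N}^k$ with $g\neq1_G$ or $p\neq q$ one has $\sigma^p(x)\neq g\cdot\sigma^q(x)$; otherwise $x$ is $G$-periodic. *)

theory Defs
  imports "HOL-Library.Function_Algebras" "HOL-Library.Countable_Set" "HOL-Algebra.Group"
begin

text \<open>Degrees live in N^k, represented as functions 'k \<Rightarrow> nat for a finite index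
type 'k with CARD('k) = k; addition, subtraction and the order are pointwise.
A k-graph is given by its set of morphisms L, its set of vertices (objects,
identified with identity morphisms) V, range r, source s, composition cmp
(meaningful when s mu = r nu) and degree map d.\<close>

definition is_kgraph ::
  "'m set \<Rightarrow> 'm set \<Rightarrow> ('m \<Rightarrow> 'm) \<Rightarrow> ('m \<Rightarrow> 'm) \<Rightarrow> ('m \<Rightarrow> 'm \<Rightarrow> 'm)
   \<Rightarrow> ('m \<Rightarrow> ('k::finite \<Rightarrow> nat)) \<Rightarrow> bool" where
  "is_kgraph L V r s cmp d \<longleftrightarrow>
     countable L \<and> V \<subseteq> L \<and>
     (\<forall>\<mu>\<in>L. r \<mu> \<in> V \<and> s \<mu> \<in> V) \<and>
     (\<forall>v\<in>V. r v = v \<and> s v = v) \<and>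
     (\<forall>\<mu>\<in>L. \<forall>\<nu>\<in>L. s \<mu> = r \<nu> \<longrightarrow>
        cmp \<mu> \<nu> \<in> L \<and> r (cmp \<mu> \<nu>) = r \<mu> \<and> s (cmp \<mu> \<nu>) = s \<nu>) \<and>
     (\<forall>\<mu>\<in>L. \<forall>\<nu>\<in>L. \<forall>\<tau>\<in>L. s \<mu> = r \<nu> \<longrightarrow> s \<nu> = r \<tau> \<longrightarrow>
        cmp (cmp \<mu> \<nu>) \<tau> = cmp \<mu> (cmp \<nu> \<tau>)) \<and>
     (\<forall>\<mu>\<in>L. cmp (r \<mu>) \<mu> = \<mu> \<and> cmp \<mu> (s \<mu>) = \<mu>) \<and>
     (\<forall>\<mu>\<in>L. \<forall>\<nu>\<in>L. s \<mu> = r \<nu> \<longrightarrow> d (cmp \<mu> \<nu>) = d \<mu> + d \<nu>) \<and>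
     (\<forall>v\<in>V. d v = 0) \<and>
     (\<forall>\<mu>\<in>L. \<forall>m n. d \<mu> = m + n \<longrightarrow>
        (\<exists>!(\<alpha>, \<beta>). \<alpha> \<in> L \<and> \<beta> \<in> L \<and> d \<alpha> = m \<and> d \<beta> = n \<and>
                  s \<alpha> = r \<beta> \<and> \<mu> = cmp \<alpha> \<beta>))"

definition row_finite ::
  "'m set \<Rightarrow> 'm set \<Rightarrow> ('m \<Rightarrow> 'm) \<Rightarrow> ('m \<Rightarrow> ('k \<Rightarrow> nat)) \<Rightarrow> bool" where
  "row_finite L V r d \<longleftrightarrow> (\<forall>v\<in>V. \<forall>n. finite {\<mu>\<in>L. d \<mu> = n \<and> r \<mu> = v})"

definition source_free ::
  "'m set \<Rightarrow> 'm set \<Rightarrow> ('m \<Rightarrow> 'm) \<Rightarrow> ('m \<Rightarrow> ('k \<Rightarrow> nat)) \<Rightarrow> bool" where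
  "source_free L V r d \<longleftrightarrow> (\<forall>v\<in>V. \<forall>n. {\<mu>\<in>L. d \<mu> = n \<and> r \<mu> = v} \<noteq> {})"

text \<open>Self-similar action of the group G (HOL-Algebra) on the k-graph:
act g mu = g . mu, restr g mu = g|_mu.\<close>

definition self_similar ::
  "('g, 'b) monoid_scheme \<Rightarrow> ('g \<Rightarrow> 'm \<Rightarrow> 'm) \<Rightarrow> ('g \<Rightarrow> 'm \<Rightarrow> 'g)
   \<Rightarrow> 'm set \<Rightarrow> 'm set \<Rightarrow> ('m \<Rightarrow> 'm) \<Rightarrow> ('m \<Rightarrow> 'm) \<Rightarrow> ('m \<Rightarrow> 'm \<Rightarrow> 'm)
   \<Rightarrow> ('m \<Rightarrow> ('k::finite \<Rightarrow> nat)) \<Rightarrow> bool" where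
  "self_similar G act restr L V r s cmp d \<longleftrightarrow>
     group G \<and> countable (carrier G) \<and>
     (\<forall>g\<in>carrier G. bij_betw (act g) L L \<and>
        (\<forall>\<mu>\<in>L. d (act g \<mu>) = d \<mu> \<and> r (act g \<mu>) = act g (r \<mu>) \<and>
                s (act g \<mu>) = act g (s \<mu>))) \<and>
     (\<forall>\<mu>\<in>L. act \<one>\<^bsub>G\<^esub> \<mu> = \<mu>) \<and>
     (\<forall>g\<in>carrier G. \<forall>h\<in>carrier G. \<forall>\<mu>\<in>L.
        act (g \<otimes>\<^bsub>G\<^esub> h) \<mu> = act g (act h \<mu>)) \<and>
     (\<forall>g\<in>carrier G. \<forall>\<mu>\<in>L. restr g \<mu> \<in> carrier G) \<and>
     (\<forall>g\<in>carrier G. \<forall>\<mu>\<in>L. \<forall>\<nu>\<in>L. s \<mu> = r \<nu> \<longrightarrow>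
        act g (cmp \<mu> \<nu>) = cmp (act g \<mu>) (act (restr g \<mu>) \<nu>)) \<and>
     (\<forall>g\<in>carrier G. \<forall>v\<in>V. restr g v = g) \<and>
     (\<forall>g\<in>carrier G. \<forall>\<mu>\<in>L. \<forall>\<nu>\<in>L. s \<mu> = r \<nu> \<longrightarrow>
        restr g (cmp \<mu> \<nu>) = restr (restr g \<mu>) \<nu>) \<and>
     (\<forall>\<mu>\<in>L. restr \<one>\<^bsub>G\<^esub> \<mu> = \<one>\<^bsub>G\<^esub>) \<and>
     (\<forall>g\<in>carrier G. \<forall>h\<in>carrier G. \<forall>\<mu>\<in>L.
        restr (g \<otimes>\<^bsub>G\<^esub> h) \<mu> = restr g (act h \<mu>) \<otimes>\<^bsub>G\<^esub> restr h \<mu>)"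

definition pseudo_free ::
  "('g, 'b) monoid_scheme \<Rightarrow> ('g \<Rightarrow> 'm \<Rightarrow> 'm) \<Rightarrow> ('g \<Rightarrow> 'm \<Rightarrow> 'g) \<Rightarrow> 'm set \<Rightarrow> bool" where
  "pseudo_free G act restr L \<longleftrightarrow>
     (\<forall>g\<in>carrier G. \<forall>\<mu>\<in>L. act g \<mu> = \<mu> \<and> restr g \<mu> = \<one>\<^bsub>G\<^esub> \<longrightarrow> g = \<one>\<^bsub>G\<^esub>)"

text \<open>Infinite paths: degree-preserving functors Omega_k \<rightarrow> Lambda, represented as
functions x p q defined for p \<le> q and equal to undefined elsewhere (so that
equality of paths is plain HOL equality). The object (p,p) is sent to the
vertex x p p.\<close>

definition inf_paths ::
  "'m set \<Rightarrow> 'm set \<Rightarrow> ('m \<Rightarrow> 'm) \<Rightarrow> ('m \<Rightarrow> 'm) \<Rightarrow> ('m \<Rightarrow> 'm \<Rightarrow> 'm)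
   \<Rightarrow> ('m \<Rightarrow> ('k::finite \<Rightarrow> nat)) \<Rightarrow> (('k \<Rightarrow> nat) \<Rightarrow> ('k \<Rightarrow> nat) \<Rightarrow> 'm) set" where
  "inf_paths L V r s cmp d =
     {x. (\<forall>p q. \<not> p \<le> q \<longrightarrow> x p q = undefined) \<and>
         (\<forall>p. x p p \<in> V) \<and>
         (\<forall>p q. p \<le> q \<longrightarrow> x p q \<in> L \<and> d (x p q) = q - p \<and>
                r (x p q) = x p p \<and> s (x p q) = x q q) \<and>
         (\<forall>p q m. p \<le> q \<longrightarrow> q \<le> m \<longrightarrow> cmp (x p q) (x q m) = x p m)}"

definition shift ::
  "('k::finite \<Rightarrow> nat) \<Rightarrow> (('k \<Rightarrow> nat) \<Rightarrow> ('k \<Rightarrow> nat) \<Rightarrow> 'm) \<Rightarrow> (('k \<Rightarrow> nat) \<Rightarrow> ('k \<Rightarrow> nat) \<Rightarrow> 'm)" where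
  "shift n x = (\<lambda>p q. if p \<le> q then x (p + n) (q + n) else undefined)"

definition path_act ::
  "('g \<Rightarrow> 'm \<Rightarrow> 'm) \<Rightarrow> ('g \<Rightarrow> 'm \<Rightarrow> 'g) \<Rightarrow> 'g
   \<Rightarrow> (('k::finite \<Rightarrow> nat) \<Rightarrow> ('k \<Rightarrow> nat) \<Rightarrow> 'm) \<Rightarrow> (('k \<Rightarrow> nat) \<Rightarrow> ('k \<Rightarrow> nat) \<Rightarrow> 'm)" where
  "path_act act restr g x = (\<lambda>p q. if p \<le> q then act (restr g (x 0 p)) (x p q) else undefined)"

definition G_aperiodic ::
  "('g, 'b) monoid_scheme \<Rightarrow> ('g \<Rightarrow> 'm \<Rightarrow> 'm) \<Rightarrow> ('g \<Rightarrow> 'm \<Rightarrow> 'g)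
   \<Rightarrow> (('k::finite \<Rightarrow> nat) \<Rightarrow> ('k \<Rightarrow> nat) \<Rightarrow> 'm) \<Rightarrow> bool" where
  "G_aperiodic G act restr x \<longleftrightarrow>
     (\<forall>g\<in>carrier G. \<forall>p q. (g \<noteq> \<one>\<^bsub>G\<^esub> \<or> p \<noteq> q) \<longrightarrow>
        shift p x \<noteq> path_act act restr g (shift q x))"

definition G_periodic ::
  "('g, 'b) monoid_scheme \<Rightarrow> ('g \<Rightarrow> 'm \<Rightarrow> 'm) \<Rightarrow> ('g \<Rightarrow> 'm \<Rightarrow> 'g)
   \<Rightarrow> (('k::finite \<Rightarrow> nat) \<Rightarrow> ('k \<Rightarrow> nat) \<Rightarrow> 'm) \<Rightarrow> bool" where
  "G_periodic G act restr x \<longleftrightarrow> \<not> G_aperiodic G act restr x"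

end

theory Submission
  imports Defs
begin

text \<open>If \<open>\<sigma>\<^sup>p(x) = g \<cdot> \<sigma>\<^sup>q(x)\<close>, then shifting both sides by \<open>n\<close> gives
\<open>\<sigma>\<^sup>p(\<sigma>\<^sup>n x) = g|\<^sub>\<mu> \<cdot> \<sigma>\<^sup>q(\<sigma>\<^sup>n x)\<close> with \<open>\<mu> = x(q, q + n)\<close>. This new witness could only be
trivial if \<open>p = q\<close> and \<open>g|\<^sub>\<mu> = 1\<close>; but then \<open>g\<close> also fixes \<open>\<mu>\<close>, so pseudo freeness
forces \<open>g = 1\<close>, contradicting the nontriviality of the original witness.
The converse is the case \<open>n = 0\<close>.\<close>

lemma inf_pathsD:
  assumes "x \<in> inf_paths L V r s cmp d"
  shows inf_paths_vertex: "x p p \<in> V"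
    and inf_paths_in: "p \<le> q \<Longrightarrow> x p q \<in> L"
    and inf_paths_source_range: "p \<le> q \<Longrightarrow> q \<le> m \<Longrightarrow> s (x p q) = r (x q m)"
    and inf_paths_cmp: "p \<le> q \<Longrightarrow> q \<le> m \<Longrightarrow> cmp (x p q) (x q m) = x p m"
  using assms order_refl unfolding inf_paths_def by (fastforce dest: order_trans)+

lemma self_similarD:
  assumes "self_similar G act restr L V r s cmp d" and "g \<in> carrier G"
  shows self_similar_restr_closed: "\<mu> \<in> L \<Longrightarrow> restr g \<mu> \<in> carrier G"
    and self_similar_restr_vertex: "v \<in> V \<Longrightarrow> restr g v = g"
    and self_similar_restr_cmp:
      "\<mu> \<in> L \<Longrightarrow> \<nu> \<in> L \<Longrightarrow> s \<mu> = r \<nu> \<Longrightarrow> restr g (cmp \<mu> \<nu>) = restr (restr g \<mu>) \<nu>"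
  using assms unfolding self_similar_def by blast+

lemma shift_in_inf_paths:
  "x \<in> inf_paths L V r s cmp d \<Longrightarrow> shift n x \<in> inf_paths L V r s cmp d"
  unfolding inf_paths_def shift_def by auto

lemma shift_0: "x \<in> inf_paths L V r s cmp d \<Longrightarrow> shift 0 x = x"
  unfolding inf_paths_def shift_def by (auto simp: fun_eq_iff)

lemma shift_shift: "shift n (shift q x) = shift (q + n) x"
  unfolding shift_def by (auto simp: fun_eq_iff add_ac)

lemma shift_path_act:
  assumes ss: "self_similar G act restr L V r s cmp d"
    and y: "y \<in> inf_paths L V r s cmp d" and g: "g \<in> carrier G"
  shows "shift n (path_act act restr g y) = path_act act restr (restr g (y 0 n)) (shift n y)"
proof -
  have "restr (restr g (y 0 n)) (y n (n + p)) = restr g (y 0 (n + p))" for p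
  proof -
    have "0 \<le> n" "n \<le> n + p" by (simp_all add: le_fun_def)
    then have "y 0 n \<in> L" "y n (n + p) \<in> L" "s (y 0 n) = r (y n (n + p))"
      using inf_paths_in[OF y] inf_paths_source_range[OF y] by blast+
    then show ?thesis
      using self_similar_restr_cmp[OF ss g] inf_paths_cmp[OF y \<open>0 \<le> n\<close> \<open>n \<le> n + p\<close>]
      by metis
  qed
  then show ?thesis
    unfolding shift_def path_act_def by (auto simp: fun_eq_iff add.commute)
qed

lemma G_periodic_iff:
  "G_periodic G act restr x \<longleftrightarrow>
     (\<exists>g\<in>carrier G. \<exists>p q. (g \<noteq> \<one>\<^bsub>G\<^esub> \<or> p \<noteq> q) \<and> shift p x = path_act act restr g (shift q x))"
  unfolding G_periodic_def G_aperiodic_def by blast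

lemma G_periodic_shift:
  assumes ss: "self_similar G act restr L V r s cmp d"
    and pf: "pseudo_free G act restr L"
    and x: "x \<in> inf_paths L V r s cmp d"
    and per: "G_periodic G act restr x"
  shows "G_periodic G act restr (shift n x)"
proof -
  obtain g p q where g: "g \<in> carrier G" and nontriv: "g \<noteq> \<one>\<^bsub>G\<^esub> \<or> p \<noteq> q"
    and eq: "shift p x = path_act act restr g (shift q x)"
    using per unfolding G_periodic_iff by blast
  define \<mu> where "\<mu> = x q (q + n)"
  have "q \<le> q + n" "0 \<le> n" by (simp_all add: le_fun_def)
  then have \<mu>: "\<mu> \<in> L" "shift q x 0 n = \<mu>"
    unfolding \<mu>_def shift_def using inf_paths_in[OF x] by (simp_all add: add.commute)
  have h: "restr g \<mu> \<in> carrier G"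
    using self_similar_restr_closed[OF ss g \<mu>(1)] .
  have "shift p (shift n x) = shift n (shift p x)"
    by (simp add: shift_shift add.commute)
  also have "\<dots> = shift n (path_act act restr g (shift q x))"
    using eq by simp
  also have "\<dots> = path_act act restr (restr g \<mu>) (shift n (shift q x))"
    using shift_path_act[OF ss shift_in_inf_paths[OF x] g] \<mu>(2) by simp
  also have "shift n (shift q x) = shift q (shift n x)"
    by (simp add: shift_shift add.commute)
  finally have eq_n: "shift p (shift n x) = path_act act restr (restr g \<mu>) (shift q (shift n x))" .
  have "restr g \<mu> \<noteq> \<one>\<^bsub>G\<^esub> \<or> p \<noteq> q"
  proof (rule ccontr)
    assume "\<not> ?thesis"
    then have trivial: "restr g \<mu> = \<one>\<^bsub>G\<^esub>" and "p = q" by auto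
    have "restr g (x q q) = g"
      using self_similar_restr_vertex[OF ss g inf_paths_vertex[OF x]] .
    moreover have "shift p x 0 n = path_act act restr g (shift q x) 0 n"
      using eq by simp
    ultimately have "act g \<mu> = \<mu>"
      using \<open>p = q\<close> unfolding \<mu>_def shift_def path_act_def by (simp add: add.commute)
    then have "g = \<one>\<^bsub>G\<^esub>"
      using pf g \<mu>(1) trivial unfolding pseudo_free_def by blast
    with nontriv \<open>p = q\<close> show False by simp
  qed
  with h eq_n show ?thesis
    unfolding G_periodic_iff by blast
qed

theorem lemma3p4:
  fixes L V :: "'m set" and r s :: "'m \<Rightarrow> 'm" and cmp :: "'m \<Rightarrow> 'm \<Rightarrow> 'm"
    and d :: "'m \<Rightarrow> ('k::finite \<Rightarrow> nat)"
    and G :: "('g, 'b) monoid_scheme" and act :: "'g \<Rightarrow> 'm \<Rightarrow> 'm" and restr :: "'g \<Rightarrow> 'm \<Rightarrow> 'g"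
    and x :: "('k \<Rightarrow> nat) \<Rightarrow> ('k \<Rightarrow> nat) \<Rightarrow> 'm"
  assumes "is_kgraph L V r s cmp d"
    and "row_finite L V r d"
    and "source_free L V r d"
    and "self_similar G act restr L V r s cmp d"
    and "pseudo_free G act restr L"
    and "x \<in> inf_paths L V r s cmp d"
  shows "G_periodic G act restr x \<longleftrightarrow> (\<forall>n. G_periodic G act restr (shift n x))"
  using G_periodic_shift[OF assms(4-6)] shift_0[OF assms(6)] by metis

end
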